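(* Let $\mathbb{L}=(\mathcal{P},\mathcal{C},\parallel)$ be a Laguerre plane satisfying axioms (C) and (S). If $K,L,M,N$ are circles and $a,b,c,d$ are points such that $K\cap L=\{a\}$, $L\cap M=\{b\}$, $M\cap N=\{c\}$, $N\cap K=\{d\}$ and $a\parallel c$, then $b\parallel d$.
   Context: A Laguerre plane is a triple $(\mathcal{P},\mathcal{C},\parallel)$ where $\mathcal{P}$ is a set of points, $\mathcal{C}\subset 2^{\mathcal{P}}$ a set of circles and $\parallel$ an equivalence relation on $\mathcal{P}$ (parallelism; its classes are called generators) such that: (1) any three pairwise non-parallel points lie on a unique circle; (2) for every circle $K$ and non-parallel points $p\in K$, $q\notin K$ there is exactly one circle $L$ with $q\in L$ and $K\cap L=\{p\}$; (3) for every point $p$ and circle $K$ there is exactly one point $q\in K$ with $q\parallel p$; (4) some circle contains at least three but not all points. Circles $K,L$ are tangent at $p$ if $K\cap L=\{p\}$ or $K=L$ (with $p\in K$). For $p\in K$, $\langle p,K\rangle$ denotes the set of circles tangent to $K$ at $p$. Axiom (C): for any circles $K,L$ and any point $p\in K\setminus L$ there exists exactly one circle $M\in\langle p,K\rangle$ with $|M\cap L|=1$. Axiom (S): if $K,L,M,N$ are circles and $a,b,c,d$ points with $K\cap L=\{a\}$, $L\cap M=\{b\}$, $M\cap N=\{c\}$, $N\cap K=\{d\}$ and $a\nparallel c$, then there is a circle containing $a,b,c,d$. *)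

theory Defs
  imports Main
begin

text \<open>A Laguerre plane: point set P (all elements of type 'p are points),
  circle set C (a set of subsets of the points), parallelism par.\<close>

definition laguerre_plane :: "'p set set \<Rightarrow> ('p \<Rightarrow> 'p \<Rightarrow> bool) \<Rightarrow> bool" where
  "laguerre_plane C par \<longleftrightarrow>
     equivp par \<and>
     (\<forall>x y z. \<not> par x y \<and> \<not> par y z \<and> \<not> par x z \<longrightarrow>
        (\<exists>!K. K \<in> C \<and> x \<in> K \<and> y \<in> K \<and> z \<in> K)) \<and>
     (\<forall>K\<in>C. \<forall>p q. p \<in> K \<and> q \<notin> K \<and> \<not> par p q \<longrightarrow>
        (\<exists>!L. L \<in> C \<and> q \<in> L \<and> K \<inter> L = {p})) \<and>
     (\<forall>p. \<forall>K\<in>C. \<exists>!q. q \<in> K \<and> par q p) \<and>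
     (\<exists>K\<in>C. (\<exists>x y z. x \<in> K \<and> y \<in> K \<and> z \<in> K \<and> x \<noteq> y \<and> y \<noteq> z \<and> x \<noteq> z)
             \<and> K \<noteq> UNIV)"

definition tangent_at :: "'p set \<Rightarrow> 'p set \<Rightarrow> 'p \<Rightarrow> bool" where
  "tangent_at K L p \<longleftrightarrow> K \<inter> L = {p} \<or> (K = L \<and> p \<in> K)"

definition tangent_pencil :: "'p set set \<Rightarrow> 'p \<Rightarrow> 'p set \<Rightarrow> 'p set set" where
  "tangent_pencil C p K = {M \<in> C. tangent_at M K p}"

definition axiom_C :: "'p set set \<Rightarrow> bool" where
  "axiom_C C \<longleftrightarrow>
     (\<forall>K\<in>C. \<forall>L\<in>C. \<forall>p. p \<in> K \<and> p \<notin> L \<longrightarrow>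
        (\<exists>!M. M \<in> tangent_pencil C p K \<and> card (M \<inter> L) = 1))"

definition axiom_S :: "'p set set \<Rightarrow> ('p \<Rightarrow> 'p \<Rightarrow> bool) \<Rightarrow> bool" where
  "axiom_S C par \<longleftrightarrow>
     (\<forall>K\<in>C. \<forall>L\<in>C. \<forall>M\<in>C. \<forall>N\<in>C. \<forall>a b c d.
        K \<inter> L = {a} \<and> L \<inter> M = {b} \<and> M \<inter> N = {c} \<and> N \<inter> K = {d} \<and> \<not> par a c
        \<longrightarrow> (\<exists>Q\<in>C. a \<in> Q \<and> b \<in> Q \<and> c \<in> Q \<and> d \<in> Q))"

end

theory Submission
  imports Defs
begin

text \<open>Suppose \<open>b\<close> and \<open>d\<close> are not parallel. Reading the quadrilateral of circles cyclically
  from \<open>L\<close>, axiom (S) yields a circle through \<open>b, c, d, a\<close>. A circle meets each generator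
  exactly once, so \<open>a \<parallel> c\<close> forces \<open>a = c\<close>; then \<open>a\<close> lies on all four circles, whence
  \<open>b = a = d\<close>, a contradiction.\<close>

lemma laguerre_plane_equivp:
  assumes "laguerre_plane C par"
  shows "equivp par"
  using assms unfolding laguerre_plane_def by (elim conjE)

lemma laguerre_plane_unique_parallel:
  assumes "laguerre_plane C par" and "K \<in> C"
  shows "\<exists>!x. x \<in> K \<and> par x q"
  using assms unfolding laguerre_plane_def by (elim conjE) simp

lemma laguerre_plane_parallel_on_circle_eq:
  assumes "laguerre_plane C par" and "K \<in> C"
    and "p \<in> K" "q \<in> K" "par p q"
  shows "p = q"
proof -
  have "par q q"
    using laguerre_plane_equivp[OF assms(1)] by (rule equivp_reflp)
  with assms(3-5) show ?thesis
    using laguerre_plane_unique_parallel[OF assms(1,2), of q] by (auto elim: ex1E)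
qed

theorem proposition2p2:
  fixes C :: "'p set set" and par :: "'p \<Rightarrow> 'p \<Rightarrow> bool"
  assumes "laguerre_plane C par" and "axiom_C C" and "axiom_S C par"
    and "K \<in> C" "L \<in> C" "M \<in> C" "N \<in> C"
    and "K \<inter> L = {a}" "L \<inter> M = {b}" "M \<inter> N = {c}" "N \<inter> K = {d}"
    and "par a c"
  shows "par b d"
proof (rule ccontr)
  assume "\<not> par b d"
  then obtain Q where "Q \<in> C" "a \<in> Q" "c \<in> Q"
    using assms(3) unfolding axiom_S_def
    by (metis assms(4-11))
  then have "a = c"
    using laguerre_plane_parallel_on_circle_eq[OF assms(1)] assms(12) by blast
  then have "b = a" "d = a"
    using assms(8-11) by auto
  then show False
    using \<open>\<not> par b d\<close> laguerre_plane_equivp[OF assms(1)] by (metis equivp_reflp)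
qed

end
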